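(* Let $\mathcal{S}$ be a set of sum indecomposable permutations that is downward closed among indecomposables (if $\sigma\in\mathcal{S}$, $\tau$ is a subpermutation of $\sigma$ and $\tau$ is indecomposable, then $\tau\in\mathcal{S}$), and suppose there is a constant $c$ with $1\leq|\mathcal{S}_n|\leq c$ for all $n\geq1$. Then the growth rate $\lim_{n\to\infty}|(\bigoplus\mathcal{S})_n|^{1/n}$ of the sum closure $\bigoplus\mathcal{S}$ exists and equals the unique real $\gamma>1$ satisfying $$\sum_{n=1}^\infty|\mathcal{S}_n|\,\gamma^{-n}=1.$$
   Context: A permutation of length $n$ is a sequence containing each element of $\{1,\dots,n\}$ exactly once; $\tau$ is a subpermutation of $\sigma$ if some subsequence of $\sigma$ has the same relative order as $\tau$. For a set of permutations $\mathcal{S}$, $\mathcal{S}_n$ is the set of its members of length $n$. The direct sum of $\sigma$ (length $k$) and $\tau$ (length $\ell$) is the permutation $\sigma\oplus\tau$ of length $k+\ell$ with $(\sigma\oplus\tau)(i)=\sigma(i)$ for $i\leq k$ and $(\sigma\oplus\tau)(i)=k+\tau(i-k)$ for $k<i\leq k+\ell$. A permutation is (sum) indecomposable if it is not the direct sum of two shorter permutations. The sum closure $\bigoplus\mathcal{S}$ is the set of all permutations $\sigma_1\oplus\cdots\oplus\sigma_r$ ($r\geq1$) with each $\sigma_i\in\mathcal{S}$. *)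

theory Defs
  imports Complex_Main
begin

definition is_perm :: "nat list \<Rightarrow> bool" where
  "is_perm xs \<longleftrightarrow> distinct xs \<and> set xs = {1..length xs}"

definition order_iso :: "nat list \<Rightarrow> nat list \<Rightarrow> bool" where
  "order_iso xs ys \<longleftrightarrow> length xs = length ys \<and>
     (\<forall>i < length xs. \<forall>j < length xs. (xs ! i < xs ! j) \<longleftrightarrow> (ys ! i < ys ! j))"

definition subperm :: "nat list \<Rightarrow> nat list \<Rightarrow> bool" where
  "subperm tau sigma \<longleftrightarrow> (\<exists>I. order_iso tau (nths sigma I))"

definition dsum :: "nat list \<Rightarrow> nat list \<Rightarrow> nat list" where
  "dsum s t = s @ map (\<lambda>x. x + length s) t"

definition indecomposable :: "nat list \<Rightarrow> bool" where
  "indecomposable sigma \<longleftrightarrow> \<not> (\<exists>a b. is_perm a \<and> is_perm b \<and>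
      length a < length sigma \<and> length b < length sigma \<and> sigma = dsum a b)"

definition sum_closure :: "nat list set \<Rightarrow> nat list set" where
  "sum_closure S = {foldr dsum ss [] | ss. ss \<noteq> [] \<and> set ss \<subseteq> S}"

definition level :: "nat list set \<Rightarrow> nat \<Rightarrow> nat list set" where
  "level S n = {sigma \<in> S. length sigma = n}"

end

theory Submission
  imports Defs
begin

text \<open>A nonempty member of the sum closure splits uniquely as its first indecomposable block,
  which lies in S, direct-summed with a possibly empty member of the closure. Hence the counts
  f(n) of the closure (with f(0) = 1) obey the renewal recurrence
  f(n) = \<Sum>k=1..n. s(k) f(n-k), where s(k) = |S_k|. Since 1 \<le> s(k) \<le> c, the power series
  F(x) = \<Sum> s(k) x^k is continuous and strictly increasing on [0,1) with F(0) = 0 and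
  F(3/4) \<ge> 1, so F(\<rho>) = 1 for exactly one \<rho> in (0,1), and \<gamma> = 1/\<rho>. Induction on the
  recurrence gives f(n) \<rho>^n \<le> 1; for r > \<rho> some partial sum of F(r) reaches 1, and the same
  induction gives f(n) r^n \<ge> r^N. Taking n-th roots, f(n)^(1/n) \<rightarrow> 1/\<rho>.\<close>

lemma length_dsum [simp]: "length (dsum a b) = length a + length b"
  by (simp add: dsum_def)

lemma dsum_Nil [simp]: "dsum a [] = a" "dsum [] b = b"
  by (simp_all add: dsum_def)

lemma is_perm_Nil [simp]: "is_perm []"
  by (simp add: is_perm_def)

lemma is_perm_dsum:
  assumes "is_perm a" "is_perm b"
  shows "is_perm (dsum a b)"
proof -
  have "(\<lambda>x. x + length a) ` {1..length b} = {length a + 1..length a + length b}"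
    by (auto simp: image_iff intro!: exI[where x="_ - length a"])
  then show ?thesis
    using assms by (auto simp: is_perm_def dsum_def distinct_map inj_on_def)
qed

lemma is_perm_dsum_cancel_left:
  assumes ac: "is_perm (dsum a c)" and a: "is_perm a"
  shows "is_perm c"
proof -
  have dist: "distinct c" and disj: "\<forall>x\<in>set c. x + length a \<notin> set a"
    using ac by (auto simp: is_perm_def dsum_def distinct_map inj_on_def)
  have "x \<in> {1..length c}" if "x \<in> set c" for x
  proof -
    have "x + length a \<in> set (dsum a c)"
      using that by (simp add: dsum_def)
    then have "x + length a \<in> {1..length a + length c}"
      using ac by (simp add: is_perm_def)
    moreover have "x + length a \<notin> {1..length a}"
      using disj a that by (simp add: is_perm_def)
    ultimately show ?thesis by auto
  qed
  then have "set c = {1..length c}"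
    using dist by (intro card_subset_eq) (auto simp: distinct_card)
  with dist show ?thesis
    by (simp add: is_perm_def)
qed

text \<open>An indecomposable permutation cannot properly extend the first block of a direct sum,
  since the extension would itself split off that block.\<close>
lemma indecomposable_not_dsum_prefix:
  assumes a: "is_perm a" "a \<noteq> []" and a': "is_perm a'" "indecomposable a'"
    and lt: "length a < length a'" and eq: "dsum a b = dsum a' b'"
  shows False
proof -
  define c where "c = take (length a' - length a) b"
  have "a' = take (length a') (dsum a b)"
    using eq by (simp add: dsum_def)
  also have "\<dots> = dsum a c"
    using lt by (simp add: dsum_def c_def take_map)
  finally have a'_eq: "a' = dsum a c" .
  then have "is_perm c"
    using a' a by (blast intro: is_perm_dsum_cancel_left)
  moreover have "length c < length a'"
    using a'_eq a by simp
  ultimately show False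
    using a' a lt a'_eq unfolding indecomposable_def by blast
qed

lemma dsum_indecomposable_cancel:
  assumes "is_perm a" "indecomposable a" "a \<noteq> []"
    and "is_perm a'" "indecomposable a'" "a' \<noteq> []"
    and eq: "dsum a b = dsum a' b'"
  shows "a = a' \<and> b = b'"
proof -
  have "length a = length a'"
    using indecomposable_not_dsum_prefix[of a a' b b'] indecomposable_not_dsum_prefix[of a' a b' b]
      assms by (metis linorder_neqE_nat)
  then have "a = a'"
    using arg_cong[OF eq, of "take (length a)"] by (simp add: dsum_def)
  moreover have "b = b'"
    using eq \<open>a = a'\<close> by (simp add: dsum_def inj_map_eq_map inj_on_def)
  ultimately show ?thesis ..
qed

lemma finite_level_perms:
  assumes "\<forall>x\<in>A. is_perm x"
  shows "finite (level A n)"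
proof (rule finite_subset)
  show "level A n \<subseteq> {xs. set xs \<subseteq> {1..n} \<and> length xs = n}"
    using assms by (auto simp: level_def is_perm_def)
  show "finite {xs. set xs \<subseteq> {1..n} \<and> length xs = n}"
    by (rule finite_lists_length_eq) simp
qed

lemma mem_sum_closure: "a \<in> S \<Longrightarrow> a \<in> sum_closure S"
  unfolding sum_closure_def by (auto intro!: exI[where x="[a]"])

lemma dsum_mem_sum_closure:
  assumes "a \<in> S" "b \<in> sum_closure S"
  shows "dsum a b \<in> sum_closure S"
proof -
  obtain ss where "b = foldr dsum ss []" "ss \<noteq> []" "set ss \<subseteq> S"
    using assms(2) by (auto simp: sum_closure_def)
  then show ?thesis
    using assms(1) unfolding sum_closure_def by (auto intro!: exI[where x="a # ss"])
qed

lemma sum_closure_is_perm: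
  assumes "\<forall>s\<in>S. is_perm s" "x \<in> sum_closure S"
  shows "is_perm x"
proof -
  have "is_perm (foldr dsum ss [])" if "set ss \<subseteq> S" for ss
    using that assms(1) by (induction ss) (auto simp: is_perm_dsum)
  then show ?thesis
    using assms(2) by (auto simp: sum_closure_def)
qed

lemma sum_closure_cases:
  assumes "x \<in> sum_closure S" "x \<noteq> []"
  obtains "x \<in> S"
  | a b where "a \<in> S" "b \<in> sum_closure S" "a \<noteq> []" "b \<noteq> []" "x = dsum a b"
proof -
  obtain ss where ss: "x = foldr dsum ss []" "ss \<noteq> []" "set ss \<subseteq> S"
    using assms(1) by (auto simp: sum_closure_def)
  have "foldr dsum ss [] \<in> S \<or> (\<exists>a\<in>S. \<exists>b\<in>sum_closure S. a \<noteq> [] \<and> b \<noteq> [] \<and> foldr dsum ss [] = dsum a b)"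
    if "ss \<noteq> []" "set ss \<subseteq> S" "foldr dsum ss [] \<noteq> []" for ss
    using that
  proof (induction ss)
    case (Cons y ys)
    consider "ys = []" | "y = []" "ys \<noteq> []" | "foldr dsum ys [] = []"
      | "y \<noteq> []" "ys \<noteq> []" "foldr dsum ys [] \<noteq> []"
      by blast
    then show ?case
    proof cases
      case 4
      then have "foldr dsum ys [] \<in> sum_closure S"
        using Cons.prems unfolding sum_closure_def by auto
      with 4 Cons.prems show ?thesis by auto
    qed (use Cons in auto)
  qed simp
  with ss assms(2) that show ?thesis by blast
qed

lemma level_sum_closure:
  assumes "n \<ge> 1"
  shows "level (sum_closure S) n = level S n \<union>
    (\<lambda>(k, a, b). dsum a b) ` (SIGMA k:{1..<n}. level S k \<times> level (sum_closure S) (n - k))"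
    (is "?C = _ \<union> ?D")
proof (intro equalityI subsetI)
  fix x assume x: "x \<in> ?C"
  then have "x \<in> sum_closure S" "x \<noteq> []"
    using assms by (auto simp: level_def)
  then show "x \<in> level S n \<union> ?D"
  proof (cases rule: sum_closure_cases)
    case (2 a b)
    then have "(length a, a, b) \<in> (SIGMA k:{1..<n}. level S k \<times> level (sum_closure S) (n - k))"
      using x by (auto simp: level_def Suc_le_eq)
    with 2 show ?thesis by force
  qed (use x in \<open>auto simp: level_def\<close>)
qed (auto simp: level_def mem_sum_closure dsum_mem_sum_closure)

lemma inj_on_dsum_blocks:
  assumes S: "\<forall>s\<in>S. is_perm s \<and> indecomposable s"
  shows "inj_on (\<lambda>(k, a, b). dsum a b) (SIGMA k:{1..<n}. level S k \<times> level T (n - k))"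
    (is "inj_on _ ?\<Sigma>")
proof (rule inj_onI)
  fix u v
  assume uv: "u \<in> ?\<Sigma>" "v \<in> ?\<Sigma>" "(\<lambda>(k, a, b). dsum a b) u = (\<lambda>(k, a, b). dsum a b) v"
  obtain k a b k' a' b' where u: "u = (k, a, b)" and v: "v = (k', a', b')"
    by (cases u, cases v) blast
  have "a \<in> S" "a' \<in> S" "1 \<le> length a" "1 \<le> length a'"
    using uv(1,2) by (simp_all add: u v level_def)
  moreover have "dsum a b = dsum a' b'"
    using uv(3) by (simp add: u v)
  ultimately have "a = a' \<and> b = b'"
    using S dsum_indecomposable_cancel[of a a' b b'] by (metis One_nat_def list.size(3) not_one_le_zero)
  then show "u = v"
    using uv by (simp add: u v level_def)
qed

lemma level_disjoint_dsum_blocks: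
  assumes S: "\<forall>s\<in>S. is_perm s \<and> indecomposable s"
  shows "level S n \<inter> (\<lambda>(k, a, b). dsum a b) ` (SIGMA k:{1..<n}. level S k \<times> level T (n - k)) = {}"
proof -
  have False if "x \<in> level S n" "a \<in> level S k" "k \<in> {1..<n}" "x = dsum a b" for x k a b
  proof -
    have "x \<in> S" "a \<in> S" "length x = n" "length a = k" "1 \<le> k" "k < n"
      using that by (simp_all add: level_def)
    moreover have "dsum a b = dsum x []"
      using that(4) by simp
    ultimately show False
      using S dsum_indecomposable_cancel[of a x b "[]"] by force
  qed
  then show ?thesis by fast
qed

lemma card_level_sum_closure:
  assumes S: "\<forall>s\<in>S. is_perm s \<and> indecomposable s" and n: "n \<ge> 1"
  shows "card (level (sum_closure S) n) =
    card (level S n) + (\<Sum>k\<in>{1..<n}. card (level S k) * card (level (sum_closure S) (n - k)))"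
proof -
  have "\<forall>s\<in>sum_closure S. is_perm s"
    using S by (blast intro: sum_closure_is_perm)
  then have fin: "finite (level S k)" "finite (level (sum_closure S) k)" for k
    using S by (auto intro: finite_level_perms)
  then have "card ((\<lambda>(k, a, b). dsum a b) ` (SIGMA k:{1..<n}. level S k \<times> level (sum_closure S) (n - k)))
      = (\<Sum>k\<in>{1..<n}. card (level S k) * card (level (sum_closure S) (n - k)))"
    using inj_on_dsum_blocks[OF S] by (simp add: card_image card_SigmaI card_cartesian_product)
  then show ?thesis
    using level_sum_closure[OF n] level_disjoint_dsum_blocks[OF S] fin by (simp add: card_Un_disjoint)
qed

locale renewal_sequence =
  fixes b g :: "nat \<Rightarrow> real" and C :: real
  assumes b_0: "b 0 = 0" and b_ge_1: "k \<ge> 1 \<Longrightarrow> 1 \<le> b k" and b_le: "b k \<le> C"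
    and g_0: "g 0 = 1" and g_rec: "n \<ge> 1 \<Longrightarrow> g n = (\<Sum>k=1..n. b k * g (n - k))"
begin

definition gf :: "real \<Rightarrow> real" where
  "gf x = (\<Sum>k. b k * x ^ k)"

lemma b_nonneg: "0 \<le> b k"
  using b_0 b_ge_1[of k] by (cases k) auto

lemma g_ge_1: "1 \<le> g n"
proof (induction n rule: less_induct)
  case (less n)
  show ?case
  proof (cases "n = 0")
    case False
    have "1 * 1 \<le> b 1 * g (n - 1)"
      using b_ge_1[of 1] less[of "n - 1"] False by (intro mult_mono) auto
    also have "\<dots> \<le> (\<Sum>k=1..n. b k * g (n - k))"
    proof (rule member_le_sum)
      show "0 \<le> b k * g (n - k)" if "k \<in> {1..n} - {1}" for k
        using that less[of "n - k"] b_nonneg[of k] by simp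
    qed (use False in auto)
    finally show ?thesis
      using False g_rec by simp
  qed (simp add: g_0)
qed

lemma g_nonneg: "0 \<le> g n"
  using g_ge_1[of n] by simp

lemma g_mult_power:
  assumes "n \<ge> 1"
  shows "g n * r ^ n = (\<Sum>k=1..n. b k * r ^ k * (g (n - k) * r ^ (n - k)))"
proof -
  have "g n * r ^ n = (\<Sum>k=1..n. b k * g (n - k) * r ^ n)"
    using g_rec[OF assms] by (simp add: sum_distrib_right)
  also have "\<dots> = (\<Sum>k=1..n. b k * r ^ k * (g (n - k) * r ^ (n - k)))"
    by (rule sum.cong) (auto simp: mult_ac simp flip: power_add)
  finally show ?thesis .
qed

lemma summable_gf:
  assumes "0 \<le> x" "x < 1"
  shows "summable (\<lambda>k. b k * x ^ k)"
proof (rule summable_comparison_test)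
  show "\<exists>N. \<forall>n\<ge>N. norm (b n * x ^ n) \<le> C * x ^ n"
    using assms b_nonneg b_le by (auto intro!: mult_right_mono)
  show "summable (\<lambda>k. C * x ^ k)"
    using assms by (intro summable_mult summable_geometric) auto
qed

lemma sums_gf: "0 \<le> x \<Longrightarrow> x < 1 \<Longrightarrow> (\<lambda>k. b k * x ^ k) sums gf x"
  unfolding gf_def by (rule summable_sums[OF summable_gf])

lemma gf_0: "gf 0 = 0"
  by (simp add: gf_def b_0)

lemma gf_strict_mono:
  assumes "0 \<le> x" "x < y" "y < 1"
  shows "gf x < gf y"
proof -
  have "0 < (\<Sum>k. b k * y ^ k - b k * x ^ k)"
  proof (rule suminf_pos2)
    show "summable (\<lambda>k. b k * y ^ k - b k * x ^ k)"
      using assms by (intro summable_diff summable_gf) auto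
    show "0 \<le> b k * y ^ k - b k * x ^ k" for k
      using assms b_nonneg by (auto intro!: mult_left_mono power_mono)
    show "0 < b 1 * y ^ 1 - b 1 * x ^ 1"
      using assms b_ge_1[of 1] by (simp flip: right_diff_distrib)
  qed
  also have "\<dots> = gf y - gf x"
    unfolding gf_def using assms by (intro suminf_diff[symmetric] summable_gf) auto
  finally show ?thesis by simp
qed

lemma isCont_gf:
  assumes "0 \<le> x" "x < 1"
  shows "isCont gf x"
  unfolding gf_def
  by (rule isCont_powser[where K = "(1 + x) / 2"]) (use assms summable_gf in auto)

lemma gf_partial_sum_le: "0 \<le> x \<Longrightarrow> x < 1 \<Longrightarrow> (\<Sum>k<N. b k * x ^ k) \<le> gf x"
  unfolding gf_def by (rule sum_le_suminf) (use summable_gf b_nonneg in auto)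

lemma ex_gf_eq_1: "\<exists>\<rho>. 0 < \<rho> \<and> \<rho> < 1 \<and> gf \<rho> = 1"
proof -
  have "b 1 * (3/4) + b 2 * (9/16) \<le> gf (3/4)"
    using gf_partial_sum_le[of "3/4" 3] by (simp add: numeral_3_eq_3 numeral_2_eq_2 b_0)
  then have "1 \<le> gf (3/4)"
    using b_ge_1[of 1] b_ge_1[of 2] by linarith
  then obtain \<rho> where "0 \<le> \<rho>" "\<rho> \<le> 3/4" "gf \<rho> = 1"
    using IVT[of gf 0 1 "3/4"] gf_0 isCont_gf by auto
  moreover have "\<rho> \<noteq> 0"
    using \<open>gf \<rho> = 1\<close> gf_0 by auto
  ultimately show ?thesis
    by (intro exI[of _ \<rho>]) auto
qed

lemma gf_eq_1_unique:
  assumes "0 \<le> x" "x < 1" "gf x = 1" "0 \<le> y" "y < 1" "gf y = 1"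
  shows "x = y"
  using gf_strict_mono[of x y] gf_strict_mono[of y x] assms by (cases x y rule: linorder_cases) auto

lemma g_mult_power_le_1:
  assumes "0 \<le> r" "r < 1" "gf r \<le> 1"
  shows "g n * r ^ n \<le> 1"
proof (induction n rule: less_induct)
  case (less n)
  show ?case
  proof (cases "n = 0")
    case False
    then have "g n * r ^ n = (\<Sum>k=1..n. b k * r ^ k * (g (n - k) * r ^ (n - k)))"
      by (simp add: g_mult_power)
    also have "\<dots> \<le> (\<Sum>k=1..n. b k * r ^ k)"
      using less assms b_nonneg False by (intro sum_mono mult_left_le) auto
    also have "\<dots> \<le> (\<Sum>k<Suc n. b k * r ^ k)"
      using assms b_nonneg by (intro sum_mono2) auto
    also have "\<dots> \<le> 1"
      using gf_partial_sum_le[of r "Suc n"] assms by simp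
    finally show ?thesis .
  qed (simp add: g_0)
qed

lemma power_le_g_mult_power:
  assumes r: "0 < r" "r < 1" and N: "1 \<le> (\<Sum>k=1..N. b k * r ^ k)"
  shows "r ^ N \<le> g n * r ^ n"
proof (induction n rule: less_induct)
  case (less n)
  show ?case
  proof (cases "n \<le> N")
    case True
    then have "r ^ N \<le> r ^ n"
      using r by (intro power_decreasing) auto
    also have "\<dots> \<le> g n * r ^ n"
      using g_ge_1[of n] r by simp
    finally show ?thesis .
  next
    case False
    have "r ^ N \<le> (\<Sum>k=1..N. b k * r ^ k * r ^ N)"
      using N r by (simp flip: sum_distrib_right)
    also have "\<dots> \<le> (\<Sum>k=1..N. b k * r ^ k * (g (n - k) * r ^ (n - k)))"
      using less False r b_nonneg by (intro sum_mono mult_left_mono) auto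
    also have "\<dots> \<le> (\<Sum>k=1..n. b k * r ^ k * (g (n - k) * r ^ (n - k)))"
      using False r b_nonneg g_nonneg by (intro sum_mono2) auto
    also have "\<dots> = g n * r ^ n"
      using False by (simp add: g_mult_power)
    finally show ?thesis .
  qed
qed

lemma partial_sum_ge_1:
  assumes "0 \<le> r" "r < 1" "1 < gf r"
  obtains N where "1 \<le> (\<Sum>k=1..N. b k * r ^ k)"
proof -
  have "(\<lambda>N. \<Sum>k<N. b k * r ^ k) \<longlonglongrightarrow> gf r"
    using sums_gf[OF assms(1,2)] by (simp add: sums_def)
  then have "\<forall>\<^sub>F N in sequentially. 1 < (\<Sum>k<N. b k * r ^ k)"
    using assms(3) by (rule order_tendstoD)
  then obtain N where "\<forall>n\<ge>N. 1 < (\<Sum>k<n. b k * r ^ k)"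
    by (auto simp: eventually_sequentially)
  then have "1 < (\<Sum>k<Suc N. b k * r ^ k)"
    by (meson le_SucI order_refl)
  also have "(\<Sum>k<Suc N. b k * r ^ k) = (\<Sum>k=1..N. b k * r ^ k)"
    by (simp add: lessThan_Suc_atMost atMost_atLeast0 sum.atLeast_Suc_atMost b_0)
  finally show ?thesis
    by (rule that[OF less_imp_le])
qed

lemma root_g_le:
  assumes "0 < r" "r < 1" "gf r \<le> 1" "n \<ge> 1"
  shows "root n (g n) \<le> 1 / r"
proof -
  have "g n \<le> (1 / r) ^ n"
    using g_mult_power_le_1[of r n] assms by (simp add: power_one_over field_simps)
  then have "root n (g n) \<le> root n ((1 / r) ^ n)"
    using assms by (intro real_root_le_mono) auto
  also have "\<dots> = 1 / r"
    using assms by (intro real_root_power_cancel) auto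
  finally show ?thesis .
qed

lemma root_g_ge:
  assumes "0 < r" "r < 1" "1 \<le> (\<Sum>k=1..N. b k * r ^ k)" "n \<ge> 1"
  shows "root n (r ^ N) / r \<le> root n (g n)"
proof -
  have "r ^ N * (1 / r) ^ n \<le> g n"
    using power_le_g_mult_power[OF assms(1-3), of n] assms by (simp add: power_one_over field_simps)
  then have "root n (r ^ N * (1 / r) ^ n) \<le> root n (g n)"
    using assms by (intro real_root_le_mono) auto
  moreover have "root n (r ^ N * (1 / r) ^ n) = root n (r ^ N) / r"
    using assms by (simp add: real_root_mult real_root_power_cancel)
  ultimately show ?thesis by simp
qed

lemma tendsto_root_g:
  assumes \<rho>: "0 < \<rho>" "\<rho> < 1" "gf \<rho> = 1"
  shows "(\<lambda>n. root n (g n)) \<longlonglongrightarrow> 1 / \<rho>"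
proof (rule order_tendstoI)
  fix a assume "1 / \<rho> < a"
  then have "root n (g n) < a" if "n \<ge> 1" for n
    using root_g_le[OF \<rho>(1,2) _ that] \<rho>(3) by fastforce
  then show "\<forall>\<^sub>F n in sequentially. root n (g n) < a"
    unfolding eventually_sequentially by blast
next
  fix a assume a: "a < 1 / \<rho>"
  show "\<forall>\<^sub>F n in sequentially. a < root n (g n)"
  proof (cases "a < 1")
    case True
    have "1 \<le> root n (g n)" if "n \<ge> 1" for n
      using that g_ge_1[of n] by simp
    with True show ?thesis
      unfolding eventually_sequentially by (meson order.strict_trans2)
  next
    case False
    then obtain r where r: "\<rho> < r" "r < 1 / a"
      using a \<rho> dense[of \<rho> "1 / a"] by (auto simp: field_simps)
    have "1 / a \<le> 1"
      using False by simp
    then have "r < 1"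
      using r by linarith
    have "a < 1 / r"
      using r False \<rho> by (simp add: field_simps)
    have "1 < gf r"
      using gf_strict_mono[of \<rho> r] r \<rho> \<open>r < 1\<close> by simp
    then obtain N where N: "1 \<le> (\<Sum>k=1..N. b k * r ^ k)"
      using partial_sum_ge_1[of r] r \<rho> \<open>r < 1\<close> by auto
    have "(\<lambda>n. root n (r ^ N) / r) \<longlonglongrightarrow> 1 / r"
      using r \<rho> by (intro tendsto_divide LIMSEQ_root_const tendsto_const) auto
    then have "\<forall>\<^sub>F n in sequentially. a < root n (r ^ N) / r"
      using \<open>a < 1 / r\<close> by (rule order_tendstoD)
    moreover have "a < root n (g n)" if "a < root n (r ^ N) / r" "n \<ge> 1" for n
      using that root_g_ge[OF _ \<open>r < 1\<close> N that(2)] r \<rho> by fastforce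
    ultimately show ?thesis
      by (blast intro: eventually_elim2[OF _ eventually_ge_at_top[of 1]])
  qed
qed

lemma sums_powi_iff_gf:
  assumes "\<delta> > 1"
  shows "(\<lambda>n. b (Suc n) * \<delta> powi (- int (Suc n))) sums 1 \<longleftrightarrow> gf (1 / \<delta>) = 1"
proof -
  have "\<delta> powi (- int (Suc n)) = (1 / \<delta>) ^ Suc n" for n
    by (simp only: power_int_minus power_int_of_nat) (simp add: power_one_over inverse_eq_divide)
  then have "(\<lambda>n. b (Suc n) * \<delta> powi (- int (Suc n))) = (\<lambda>n. b (Suc n) * (1 / \<delta>) ^ Suc n)"
    by simp
  moreover have "(\<lambda>n. b (Suc n) * (1 / \<delta>) ^ Suc n) sums 1 \<longleftrightarrow> (\<lambda>n. b n * (1 / \<delta>) ^ n) sums 1"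
    using sums_Suc_iff[of "\<lambda>n. b n * (1 / \<delta>) ^ n" 1] by (simp add: b_0)
  moreover have "(\<lambda>n. b n * (1 / \<delta>) ^ n) sums 1 \<longleftrightarrow> gf (1 / \<delta>) = 1"
    using sums_gf[of "1 / \<delta>"] assms sums_unique2 by auto
  ultimately show ?thesis by simp
qed

theorem growth_rate:
  "\<exists>\<gamma>. \<gamma> > 1
     \<and> (\<lambda>n. b (Suc n) * \<gamma> powi (- int (Suc n))) sums 1
     \<and> (\<forall>\<delta>. \<delta> > 1 \<and> (\<lambda>n. b (Suc n) * \<delta> powi (- int (Suc n))) sums 1 \<longrightarrow> \<delta> = \<gamma>)
     \<and> (\<lambda>n. root n (g n)) \<longlonglongrightarrow> \<gamma>"
proof -
  obtain \<rho> where \<rho>: "0 < \<rho>" "\<rho> < 1" "gf \<rho> = 1"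
    using ex_gf_eq_1 by blast
  show ?thesis
  proof (intro exI[of _ "1 / \<rho>"] conjI allI impI)
    show "1 / \<rho> > 1"
      using \<rho> by simp
    then show "(\<lambda>n. b (Suc n) * (1 / \<rho>) powi (- int (Suc n))) sums 1"
      using \<rho> sums_powi_iff_gf by simp
    show "(\<lambda>n. root n (g n)) \<longlonglongrightarrow> 1 / \<rho>"
      using tendsto_root_g[OF \<rho>] .
  next
    fix \<delta> assume "\<delta> > 1 \<and> (\<lambda>n. b (Suc n) * \<delta> powi (- int (Suc n))) sums 1"
    then have "\<delta> > 1" "gf (1 / \<delta>) = 1"
      using sums_powi_iff_gf by auto
    then show "\<delta> = 1 / \<rho>"
      using gf_eq_1_unique[of "1 / \<delta>" \<rho>] \<rho> by (simp add: field_simps)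
  qed
qed

end

theorem lemma3p1:
  fixes S :: "nat list set" and c :: nat
  assumes indec: "\<forall>sigma \<in> S. is_perm sigma \<and> indecomposable sigma"
    and down: "\<And>sigma tau. sigma \<in> S \<Longrightarrow> is_perm tau \<Longrightarrow> subperm tau sigma \<Longrightarrow>
                 indecomposable tau \<Longrightarrow> tau \<in> S"
    and bounded: "\<And>n. n \<ge> 1 \<Longrightarrow> 1 \<le> card (level S n) \<and> card (level S n) \<le> c"
  shows "\<exists>\<gamma>::real. \<gamma> > 1
           \<and> (\<lambda>n. real (card (level S (Suc n))) * \<gamma> powi (- int (Suc n))) sums 1
           \<and> (\<forall>\<delta>::real. \<delta> > 1 \<and> (\<lambda>n. real (card (level S (Suc n))) * \<delta> powi (- int (Suc n))) sums 1
                 \<longrightarrow> \<delta> = \<gamma>)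
           \<and> (\<lambda>n. root n (real (card (level (sum_closure S) n)))) \<longlonglongrightarrow> \<gamma>"
proof -
  define b where "b k = (if k = 0 then 0 else real (card (level S k)))" for k
  define g where "g n = (if n = 0 then 1 else real (card (level (sum_closure S) n)))" for n
  have "renewal_sequence b g (real c)"
  proof
    fix n :: nat assume n: "n \<ge> 1"
    have "(\<Sum>k=1..n. b k * g (n - k)) = b n + (\<Sum>k\<in>{1..<n}. b k * g (n - k))"
      using n by (simp add: sum.last_plus g_def)
    also have "\<dots> = g n"
      using n card_level_sum_closure[OF indec n] by (simp add: b_def g_def)
    finally show "g n = (\<Sum>k=1..n. b k * g (n - k))" ..
  qed (use bounded in \<open>auto simp: b_def g_def\<close>)
  then interpret renewal_sequence b g "real c" .
  obtain \<gamma> where \<gamma>: "\<gamma> > 1"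
    "(\<lambda>n. b (Suc n) * \<gamma> powi (- int (Suc n))) sums 1"
    "\<forall>\<delta>. \<delta> > 1 \<and> (\<lambda>n. b (Suc n) * \<delta> powi (- int (Suc n))) sums 1 \<longrightarrow> \<delta> = \<gamma>"
    "(\<lambda>n. root n (g n)) \<longlonglongrightarrow> \<gamma>"
    using growth_rate by blast
  have "(\<lambda>n. root n (real (card (level (sum_closure S) n)))) \<longlonglongrightarrow> \<gamma>"
    using \<gamma>(4) by (rule Lim_transform_eventually) (auto simp: g_def eventually_sequentially)
  moreover have b_Suc: "b (Suc n) = real (card (level S (Suc n)))" for n
    by (simp add: b_def)
  ultimately show ?thesis
    using \<gamma>(1-3) unfolding b_Suc by blast
qed

end
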